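(* Let $\Gamma_1$ be the path graph with vertices $a,b,c,d$ and edges $\{a,b\},\{b,c\},\{c,d\}$. Then $\vdash_{\Gamma_1} a\rhd d\rightarrow b,c\rhd d$.
   Context: For a finite simple undirected graph $\Gamma=(V,E)$, the border of $U\subseteq V$ is ${\cal B}(U)=\{v\in U\mid (v,w)\in E\text{ for some }w\in V\setminus U\}$, and a cut $(U,W)$ is a partition $V=U\sqcup W$. Formulas are built from $\bot$, atoms $A\rhd B$ ($A,B\subseteq V$) and $\rightarrow$; $A,B$ denotes $A\cup B$ and a vertex $v$ stands for $\{v\}$. $\vdash_\Gamma\phi$ means $\phi$ is derivable by Modus Ponens from propositional tautologies and the axioms: Reflexivity $A\rhd B$ for $B\subseteq A$; Augmentation $A\rhd B\rightarrow A,C\rhd B,C$; Transitivity $A\rhd B\rightarrow(B\rhd C\rightarrow A\rhd C)$; Contiguity $A,B\rhd C\rightarrow{\cal B}(U),{\cal B}(W),B\rhd C$ for every cut $(U,W)$ of $\Gamma$ with $A\subseteq U$, $C\subseteq W$. *)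

theory Defs
  imports Main
begin

text \<open>Graphs: the vertex set is the whole (finite) type 'v; the edge relation is E.\<close>

datatype 'v fm = Bot | Atom "'v set" "'v set" | Imp "'v fm" "'v fm"

fun eval :: "('v set \<Rightarrow> 'v set \<Rightarrow> bool) \<Rightarrow> 'v fm \<Rightarrow> bool" where
  "eval I Bot = False"
| "eval I (Atom A B) = I A B"
| "eval I (Imp p q) = (eval I p \<longrightarrow> eval I q)"

definition tautology :: "'v fm \<Rightarrow> bool" where
  "tautology p \<longleftrightarrow> (\<forall>I. eval I p)"

definition border :: "('v \<Rightarrow> 'v \<Rightarrow> bool) \<Rightarrow> 'v set \<Rightarrow> 'v set" where
  "border E U = {v \<in> U. \<exists>w \<in> UNIV - U. E v w}"

inductive derivable :: "('v \<Rightarrow> 'v \<Rightarrow> bool) \<Rightarrow> 'v fm \<Rightarrow> bool" for E where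
  taut: "tautology p \<Longrightarrow> derivable E p"
| refl: "B \<subseteq> A \<Longrightarrow> derivable E (Atom A B)"
| aug: "derivable E (Imp (Atom A B) (Atom (A \<union> C) (B \<union> C)))"
| trans: "derivable E (Imp (Atom A B) (Imp (Atom B C) (Atom A C)))"
| contig: "U \<union> W = UNIV \<Longrightarrow> U \<inter> W = {} \<Longrightarrow> A \<subseteq> U \<Longrightarrow> C \<subseteq> W \<Longrightarrow>
     derivable E (Imp (Atom (A \<union> B) C) (Atom (border E U \<union> border E W \<union> B) C))"
| mp: "derivable E p \<Longrightarrow> derivable E (Imp p q) \<Longrightarrow> derivable E q"

datatype V4 = a | b | c | d

definition path4 :: "V4 \<Rightarrow> V4 \<Rightarrow> bool" where
  "path4 x y \<longleftrightarrow> {x, y} = {a, b} \<or> {x, y} = {b, c} \<or> {x, y} = {c, d}"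

end

theory Submission
  imports Defs
begin

text \<open>Contiguity applied to the cut \<open>({a,b},{c,d})\<close>, whose borders are \<open>{b}\<close> and \<open>{c}\<close>,
  with \<open>A = {a}\<close>, \<open>B = {}\<close> and \<open>C = {d}\<close>.\<close>

lemma path4_cut_partition:
  "{a, b} \<union> {c, d} = (UNIV :: V4 set)" "{a, b} \<inter> {c, d} = ({} :: V4 set)"
  by (auto intro: V4.exhaust)

lemma border_path4_ab: "border path4 {a, b} = {b}"
  unfolding border_def path4_def by (auto simp: doubleton_eq_iff)

lemma border_path4_cd: "border path4 {c, d} = {c}"
  unfolding border_def path4_def by (auto simp: doubleton_eq_iff)

theorem proposition1:
  shows "derivable path4 (Imp (Atom {a} {d}) (Atom {b, c} {d}))"
proof -
  have "derivable path4 (Imp (Atom ({a} \<union> {}) {d})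
      (Atom (border path4 {a, b} \<union> border path4 {c, d} \<union> {}) {d}))"
    by (rule contig[OF path4_cut_partition]) auto
  then show ?thesis
    by (simp add: border_path4_ab border_path4_cd insert_commute)
qed

end
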